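(* An LR triple is uniquely determined up to isomorphism by its parameter array and trace data. That is, if $A,B,C$ on $V$ and $A',B',C'$ on $V'$ are LR triples over $\mathbb F$ of the same diameter with the same parameter array and the same trace data, then they are isomorphic.
   Context: Let $V$ be a vector space over a field $\mathbb F$ with $\dim V=d+1$. A decomposition of $V$ is a sequence $(V_i)_{i=0}^d$ of one-dimensional subspaces with $V=\bigoplus V_i$; $X$ lowers it if $XV_i=V_{i-1}$ ($1\le i\le d$), $XV_0=0$; raises it if $XV_i=V_{i+1}$ ($0\le i\le d-1$), $XV_d=0$. An ordered pair $X,Y\in\mathrm{End}(V)$ is an LR pair if some decomposition (unique, the $(X,Y)$-decomposition) is lowered by $X$ and raised by $Y$; for $1\le i\le d$ the $i$-th component is invariant under $YX$ with nonzero eigenvalue, giving the parameter sequence. An LR triple on $V$ is $A,B,C\in\mathrm{End}(V)$ with $A,B$; $B,C$; $C,A$ all LR pairs. Its parameter array is $(\{\varphi_i\};\{\varphi'_i\};\{\varphi''_i\})$, the parameter sequences of $A,B$; $B,C$; $C,A$. Let $E_i,E'_i,E''_i$ ($0\le i\le d$) be the projections onto the $i$-th components of the $(A,B)$-, $(B,C)$-, $(C,A)$-decompositions respectively (along the other components). The trace data is $(\{a_i\};\{a'_i\};\{a''_i\})$ with $a_i=\mathrm{tr}(CE_i)$, $a'_i=\mathrm{tr}(AE'_i)$, $a''_i=\mathrm{tr}(BE''_i)$. LR triples are isomorphic if some linear bijection $\sigma:V\to V'$ satisfies $\sigma A=A'\sigma$, $\sigma B=B'\sigma$, $\sigma C=C'\sigma$.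 *)

theory Defs
  imports "Jordan_Normal_Form.Matrix"
begin

text \<open>The space V of dimension n = d+1 is represented by column vectors of length n over the
 field 'a; endomorphisms of V are n x n matrices.\<close>

definition mat_trace :: "'a::comm_ring_1 mat \<Rightarrow> 'a" where
  "mat_trace M = (\<Sum>i<dim_row M. M $$ (i, i))"

text \<open>A decomposition: a list of n one-dimensional subspaces whose direct sum is the whole
 space, i.e. V_i is spanned by the i-th vector of some basis (columns of an invertible P).\<close>
definition decomposition :: "nat \<Rightarrow> 'a::field vec set list \<Rightarrow> bool" where
  "decomposition n Vs \<longleftrightarrow> length Vs = n \<and>
     (\<exists>P \<in> carrier_mat n n. invertible_mat P \<and>
        (\<forall>i<n. Vs ! i = {c \<cdot>\<^sub>v col P i | c. True}))"

definition lowers :: "nat \<Rightarrow> 'a::field mat \<Rightarrow> 'a vec set list \<Rightarrow> bool" where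
  "lowers n X Vs \<longleftrightarrow>
     (\<forall>i. 1 \<le> i \<and> i < n \<longrightarrow> (\<lambda>x. X *\<^sub>v x) ` (Vs ! i) = Vs ! (i - 1)) \<and>
     (\<lambda>x. X *\<^sub>v x) ` (Vs ! 0) = {0\<^sub>v n}"

definition raises :: "nat \<Rightarrow> 'a::field mat \<Rightarrow> 'a vec set list \<Rightarrow> bool" where
  "raises n Y Vs \<longleftrightarrow>
     (\<forall>i. i + 1 < n \<longrightarrow> (\<lambda>x. Y *\<^sub>v x) ` (Vs ! i) = Vs ! (i + 1)) \<and>
     (\<lambda>x. Y *\<^sub>v x) ` (Vs ! (n - 1)) = {0\<^sub>v n}"

definition LR_pair :: "nat \<Rightarrow> 'a::field mat \<Rightarrow> 'a mat \<Rightarrow> bool" where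
  "LR_pair n X Y \<longleftrightarrow> X \<in> carrier_mat n n \<and> Y \<in> carrier_mat n n \<and>
     (\<exists>Vs. decomposition n Vs \<and> lowers n X Vs \<and> raises n Y Vs)"

text \<open>The (X,Y)-decomposition (unique when X,Y is an LR pair).\<close>
definition LR_dec :: "nat \<Rightarrow> 'a::field mat \<Rightarrow> 'a mat \<Rightarrow> 'a vec set list" where
  "LR_dec n X Y = (THE Vs. decomposition n Vs \<and> lowers n X Vs \<and> raises n Y Vs)"

text \<open>Parameter sequence: phi_i is the eigenvalue of YX on the i-th component (1 <= i <= d).\<close>
definition param_seq :: "nat \<Rightarrow> 'a::field mat \<Rightarrow> 'a mat \<Rightarrow> nat \<Rightarrow> 'a" where
  "param_seq n X Y i = (THE c. \<forall>x \<in> LR_dec n X Y ! i. (Y * X) *\<^sub>v x = c \<cdot>\<^sub>v x)"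

definition proj_comp :: "nat \<Rightarrow> 'a::field vec set list \<Rightarrow> nat \<Rightarrow> 'a mat" where
  "proj_comp n Vs i = (THE E. E \<in> carrier_mat n n \<and>
     (\<forall>j<n. \<forall>x \<in> Vs ! j. E *\<^sub>v x = (if j = i then x else 0\<^sub>v n)))"

definition LR_triple :: "nat \<Rightarrow> 'a::field mat \<Rightarrow> 'a mat \<Rightarrow> 'a mat \<Rightarrow> bool" where
  "LR_triple n A B C \<longleftrightarrow> LR_pair n A B \<and> LR_pair n B C \<and> LR_pair n C A"

definition trace_a :: "nat \<Rightarrow> 'a::field mat \<Rightarrow> 'a mat \<Rightarrow> 'a mat \<Rightarrow> nat \<Rightarrow> 'a" where
  "trace_a n A B C i = mat_trace (C * proj_comp n (LR_dec n A B) i)"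

definition trace_a' :: "nat \<Rightarrow> 'a::field mat \<Rightarrow> 'a mat \<Rightarrow> 'a mat \<Rightarrow> nat \<Rightarrow> 'a" where
  "trace_a' n A B C i = mat_trace (A * proj_comp n (LR_dec n B C) i)"

definition trace_a'' :: "nat \<Rightarrow> 'a::field mat \<Rightarrow> 'a mat \<Rightarrow> 'a mat \<Rightarrow> nat \<Rightarrow> 'a" where
  "trace_a'' n A B C i = mat_trace (B * proj_comp n (LR_dec n C A) i)"

definition LR_triple_iso :: "nat \<Rightarrow> 'a::field mat \<Rightarrow> 'a mat \<Rightarrow> 'a mat \<Rightarrow>
    'a mat \<Rightarrow> 'a mat \<Rightarrow> 'a mat \<Rightarrow> bool" where
  "LR_triple_iso n A B C A' B' C' \<longleftrightarrow>
     (\<exists>S \<in> carrier_mat n n. invertible_mat S \<and>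
        S * A = A' * S \<and> S * B = B' * S \<and> S * C = C' * S)"

end

theory Submission
  imports Defs
begin

(*
  Fix bases adapted to the LR pairs (A,B) and (C,A): v_0, ..., v_d with B v_(i-1) = v_i and
  A v_i = phi_i v_(i-1), and w_0, ..., w_d with A w_(i-1) = w_i and C w_i = phi''_i w_(i-1).
  Since v_d spans the kernel of B, the 0-th component of the (B,C)-decomposition, B C v_d = phi'_1 v_d.
  As B shifts coordinates in the v-basis up by one, this forces C v_d = a_d v_d + phi'_1 v_(d-1),
  where the v_d-coordinate a_d is the trace tr (C E_d); hence C v_d = a_d v_d + (phi'_1 / phi_d) A v_d.
  In the w-basis this is a three-term recurrence for the coordinates of v_d whose coefficients come
  from the parameter array and a_d, so these coordinates are determined up to a scalar. The matrix S
  carrying the w-basis of one triple to that of the other therefore intertwines A and C and sends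
  v_d to a multiple of v'_d; descending with A, it sends the whole v-basis to the same multiple of
  the v'-basis, so it intertwines B as well.
*)

section \<open>Vectors and lines\<close>

lemma mult_mat_vec_zero[simp]:
  "dim_col (M :: 'a::semiring_0 mat) = n \<Longrightarrow> M *\<^sub>v 0\<^sub>v n = 0\<^sub>v (dim_row M)"
  by (intro eq_vecI) auto

lemma smult_zero_vec_right[simp]: "(a :: 'a::mult_zero) \<cdot>\<^sub>v 0\<^sub>v n = 0\<^sub>v n"
  by (intro eq_vecI) auto

lemma zero_smult_vec[simp]: "(0 :: 'a::mult_zero) \<cdot>\<^sub>v v = 0\<^sub>v (dim_vec v)"
  by (intro eq_vecI) auto

lemma mult_unit_vec:
  "(M :: 'a::semiring_1 mat) \<in> carrier_mat m n \<Longrightarrow> k < n \<Longrightarrow> M *\<^sub>v unit_vec n k = col M k"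
  by (intro eq_vecI) (auto simp: carrier_matD)

lemma smult_vec_cancel_right:
  assumes "a \<cdot>\<^sub>v v = b \<cdot>\<^sub>v v" "v \<noteq> 0\<^sub>v (dim_vec v)"
  shows "a = (b :: 'a::field)"
proof -
  obtain k where "k < dim_vec v" "v $ k \<noteq> 0"
    using assms(2) by (metis eq_vecI index_zero_vec)
  moreover have "(a \<cdot>\<^sub>v v) $ k = (b \<cdot>\<^sub>v v) $ k" using assms(1) by simp
  ultimately show ?thesis by simp
qed

lemma smult_vec_cancel_left:
  fixes v w :: "'a::field vec"
  assumes "a \<noteq> 0" "a \<cdot>\<^sub>v v = a \<cdot>\<^sub>v w"
  shows "v = w"
proof -
  have "(1 / a) \<cdot>\<^sub>v (a \<cdot>\<^sub>v v) = (1 / a) \<cdot>\<^sub>v (a \<cdot>\<^sub>v w)" using assms(2) by simp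
  then show ?thesis using assms(1) by (simp add: smult_smult_assoc)
qed

definition line :: "'a::field vec \<Rightarrow> 'a vec set" where
  "line v = {c \<cdot>\<^sub>v v | c. True}"

lemma line_self: "v \<in> line v"
  unfolding line_def by (metis (mono_tags, lifting) mem_Collect_eq one_smult_vec)

lemma line_smult:
  assumes "t \<noteq> 0"
  shows "line (t \<cdot>\<^sub>v v) = line v"
proof -
  have "c \<cdot>\<^sub>v v \<in> line (t \<cdot>\<^sub>v v)" for c
  proof -
    have "c \<cdot>\<^sub>v v = (c / t) \<cdot>\<^sub>v (t \<cdot>\<^sub>v v)" using assms by (simp add: smult_smult_assoc)
    then show ?thesis unfolding line_def by blast
  qed
  then show ?thesis by (auto simp: line_def smult_smult_assoc)
qed

lemma image_line_eq_line:
  fixes X :: "'a::field mat"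
  assumes "X \<in> carrier_mat n n" "u \<in> carrier_vec n" "v \<noteq> 0\<^sub>v n"
    and "(\<lambda>x. X *\<^sub>v x) ` line u = line v"
  obtains m where "m \<noteq> 0" "X *\<^sub>v u = m \<cdot>\<^sub>v v"
proof -
  have "X *\<^sub>v u \<in> line v" using assms(4) line_self by blast
  then obtain m where m: "X *\<^sub>v u = m \<cdot>\<^sub>v v" unfolding line_def by auto
  have "v \<in> (\<lambda>x. X *\<^sub>v x) ` line u" using assms(4) line_self by blast
  then obtain c where "v = X *\<^sub>v (c \<cdot>\<^sub>v u)" unfolding line_def by auto
  also have "\<dots> = (c * m) \<cdot>\<^sub>v v"
    using m mult_mat_vec[OF assms(1,2)] by (simp add: smult_smult_assoc)
  finally have "1 \<cdot>\<^sub>v v = (c * m) \<cdot>\<^sub>v v" by simp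
  moreover have "dim_vec v = n" using m assms(1) by (metis carrier_matD(1) dim_mult_mat_vec index_smult_vec(2))
  ultimately have "1 = c * m" using smult_vec_cancel_right assms(3) by metis
  then have "m \<noteq> 0" by auto
  with m that show ?thesis by blast
qed

section \<open>Mutually inverse matrices\<close>

definition inverse_mats :: "nat \<Rightarrow> 'a::semiring_1 mat \<Rightarrow> 'a mat \<Rightarrow> bool" where
  "inverse_mats n P Q \<longleftrightarrow>
     P \<in> carrier_mat n n \<and> Q \<in> carrier_mat n n \<and> P * Q = 1\<^sub>m n \<and> Q * P = 1\<^sub>m n"

lemma inverse_mats_sym: "inverse_mats n P Q \<Longrightarrow> inverse_mats n Q P"
  unfolding inverse_mats_def by auto

lemma inverse_mats_mult:
  assumes "inverse_mats n P Q" "inverse_mats n P' Q'"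
  shows "inverse_mats n (P * P') (Q' * Q)"
proof -
  have c: "P \<in> carrier_mat n n" "Q \<in> carrier_mat n n" "P' \<in> carrier_mat n n" "Q' \<in> carrier_mat n n"
    using assms unfolding inverse_mats_def by auto
  have "P * P' * (Q' * Q) = P * (P' * Q') * Q" "Q' * Q * (P * P') = Q' * (Q * P) * P'"
    using c by (simp_all add: assoc_mult_mat[of _ n n _ n _ n])
  then show ?thesis using assms c unfolding inverse_mats_def by auto
qed

lemma invertible_mat_obtain_inverse:
  assumes "P \<in> carrier_mat n n" "invertible_mat P"
  obtains Q where "inverse_mats n P Q"
proof -
  from assms obtain Q where Q: "P * Q = 1\<^sub>m n" "Q * P = 1\<^sub>m (dim_row Q)"
    unfolding invertible_mat_def inverts_mat_def by auto
  then have "Q \<in> carrier_mat n n" using assms(1)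
    by (metis carrier_matD carrier_matI index_mult_mat(2,3) index_one_mat(2,3))
  with Q assms(1) show ?thesis using that unfolding inverse_mats_def by auto
qed

lemma inverse_mats_invertible: "inverse_mats n P Q \<Longrightarrow> invertible_mat P"
  unfolding inverse_mats_def invertible_mat_def inverts_mat_def by auto

lemma inverse_mats_cancel_vec:
  assumes "inverse_mats n P Q" "v \<in> carrier_vec n"
  shows "Q *\<^sub>v (P *\<^sub>v v) = v"
  using assms assoc_mult_mat_vec[of Q n n P n v] unfolding inverse_mats_def by auto

lemma inverse_mats_cancel_right:
  assumes "inverse_mats n P Q" "M \<in> carrier_mat m n" "N \<in> carrier_mat m n" "M * P = N * P"
  shows "M = N"
proof -
  have c: "P \<in> carrier_mat n n" "Q \<in> carrier_mat n n" "P * Q = 1\<^sub>m n"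
    using assms(1) unfolding inverse_mats_def by auto
  have "M = M * P * Q" "N = N * P * Q"
    using assms(2,3) c by (simp_all add: assoc_mult_mat[of _ m n _ n _ n])
  then show ?thesis using assms(4) by simp
qed

lemma inverse_mats_col_nonzero:
  assumes "inverse_mats n P Q" "i < n"
  shows "col P i \<noteq> 0\<^sub>v n"
proof
  assume "col P i = 0\<^sub>v n"
  moreover have "Q *\<^sub>v col P i = unit_vec n i"
    using assms col_mult2[of Q n n P n i] unfolding inverse_mats_def by auto
  ultimately have "unit_vec n i = (0\<^sub>v n :: 'a vec)"
    using assms(1) unfolding inverse_mats_def by auto
  then show False using assms(2) by (metis index_unit_vec(1) index_zero_vec(1) zero_neq_one)
qed

lemma inverse_mats_scale_cols:
  fixes P Q :: "'a::field mat"
  assumes PQ: "inverse_mats n P Q" and g: "\<And>i. i < n \<Longrightarrow> g i \<noteq> 0"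
  shows "inverse_mats n (P * mat_diag n g) (mat_diag n (\<lambda>i. 1 / g i) * Q)"
    and "i < n \<Longrightarrow> col (P * mat_diag n g) i = g i \<cdot>\<^sub>v col P i"
proof -
  have "mat_diag n (\<lambda>i. g i * (1 / g i)) = 1\<^sub>m n" "mat_diag n (\<lambda>i. 1 / g i * g i) = (1\<^sub>m n :: 'a mat)"
    using g by (auto simp: mat_diag_def intro!: eq_matI)
  then have "inverse_mats n (mat_diag n g) (mat_diag n (\<lambda>i. 1 / g i))"
    unfolding inverse_mats_def by simp
  then show "inverse_mats n (P * mat_diag n g) (mat_diag n (\<lambda>i. 1 / g i) * Q)"
    by (rule inverse_mats_mult[OF PQ])
  show "i < n \<Longrightarrow> col (P * mat_diag n g) i = g i \<cdot>\<^sub>v col P i"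
    using PQ unfolding inverse_mats_def by (intro eq_vecI) (auto simp: mat_diag_mult_right)
qed

lemma similar_mat_wit_iff_mult:
  assumes "inverse_mats n P Q" "X \<in> carrier_mat n n" "M \<in> carrier_mat n n"
  shows "similar_mat_wit X M P Q \<longleftrightarrow> X * P = P * M"
proof -
  have c: "P \<in> carrier_mat n n" "Q \<in> carrier_mat n n" "P * Q = 1\<^sub>m n" "Q * P = 1\<^sub>m n"
    using assms(1) unfolding inverse_mats_def by auto
  note assoc = assoc_mult_mat[of _ n n _ n _ n]
  show ?thesis
  proof
    assume "similar_mat_wit X M P Q"
    then have "X * P = P * M * (Q * P)"
      using assms c by (simp add: similar_mat_wit_def assoc)
    then show "X * P = P * M" using assms c by simp
  next
    assume XP: "X * P = P * M"
    have "X = X * P * Q" using assms c by (simp add: assoc)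
    then have "X = P * M * Q" using XP by simp
    then show "similar_mat_wit X M P Q" using assms c by (intro similar_mat_witI) auto
  qed
qed

lemma intertwiner_of_common_form:
  assumes "inverse_mats n Q Qi" "inverse_mats n Q' Qi'"
    and "X \<in> carrier_mat n n" "X' \<in> carrier_mat n n" "M \<in> carrier_mat n n"
    and "X * Q = Q * M" "X' * Q' = Q' * M"
  shows "Q' * Qi * X = X' * (Q' * Qi)"
proof -
  have "similar_mat_wit X M Q Qi" "similar_mat_wit X' M Q' Qi'"
    using assms similar_mat_wit_iff_mult by blast+
  then have "similar_mat_wit X' X (Q' * Qi) (Q * Qi')"
    by (metis similar_mat_wit_sym similar_mat_wit_trans)
  moreover have "inverse_mats n (Q' * Qi) (Q * Qi')"
    using inverse_mats_mult[OF assms(2) inverse_mats_sym[OF assms(1)]] .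
  ultimately show ?thesis using similar_mat_wit_iff_mult assms(3,4) by metis
qed

section \<open>Lowering and raising matrices\<close>

definition lower_mat :: "nat \<Rightarrow> (nat \<Rightarrow> 'a::zero) \<Rightarrow> 'a mat" where
  "lower_mat n f = mat n n (\<lambda>(i, j). if j = Suc i then f j else 0)"

definition raise_mat :: "nat \<Rightarrow> 'a::{zero,one} mat" where
  "raise_mat n = mat n n (\<lambda>(i, j). if i = Suc j then 1 else 0)"

lemma lower_mat_carrier[simp]: "lower_mat n f \<in> carrier_mat n n"
  by (simp add: lower_mat_def)

lemma raise_mat_carrier[simp]: "raise_mat n \<in> carrier_mat n n"
  by (simp add: raise_mat_def)

lemma lower_raise_mat_dim[simp]:
  "dim_row (lower_mat n f) = n" "dim_col (lower_mat n f) = n"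
  "dim_row (raise_mat n) = n" "dim_col (raise_mat n) = n"
  by (simp_all add: lower_mat_def raise_mat_def)

lemma lower_raise_mat_mult_vec_carrier[simp]:
  "lower_mat n f *\<^sub>v v \<in> carrier_vec n" "raise_mat n *\<^sub>v v \<in> carrier_vec n"
  by (simp_all add: carrier_vecI)

lemma lower_mat_cong: "(\<And>j. 1 \<le> j \<Longrightarrow> j < n \<Longrightarrow> f j = g j) \<Longrightarrow> lower_mat n f = lower_mat n g"
  unfolding lower_mat_def by (intro eq_matI) auto

lemma lower_mat_mult_vec:
  "(v :: 'a::semiring_0 vec) \<in> carrier_vec n \<Longrightarrow>
     lower_mat n f *\<^sub>v v = vec n (\<lambda>i. if Suc i < n then f (Suc i) * v $ Suc i else 0)"
  by (intro eq_vecI)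
    (auto simp: lower_mat_def scalar_prod_def if_distrib[where f="\<lambda>a. a * y" for y] sum.delta'
      cong: if_cong)

lemma raise_mat_mult_vec:
  fixes v :: "'a::semiring_1 vec"
  assumes "v \<in> carrier_vec n"
  shows "raise_mat n *\<^sub>v v = vec n (\<lambda>i. if i = 0 then 0 else v $ (i - 1))"
proof (rule eq_vecI)
  fix i assume "i < dim_vec (vec n (\<lambda>i. if i = 0 then 0 else v $ (i - 1)))"
  then have i: "i < n" by simp
  have "(raise_mat n *\<^sub>v v) $ i = (\<Sum>j = 0..<n. if j = i - 1 \<and> 0 < i then v $ j else 0)"
    using i assms by (auto simp: raise_mat_def scalar_prod_def intro!: sum.cong)
  also have "\<dots> = (if i = 0 then 0 else v $ (i - 1))"
    using i by (cases "i = 0") auto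
  finally show "(raise_mat n *\<^sub>v v) $ i = vec n (\<lambda>i. if i = 0 then 0 else v $ (i - 1)) $ i"
    using i by simp
qed (simp add: raise_mat_def)

lemma col_lower_mat:
  "j < n \<Longrightarrow> col (lower_mat n f) j = (if j = 0 then 0\<^sub>v n else f j \<cdot>\<^sub>v unit_vec n (j - 1))"
  for f :: "nat \<Rightarrow> 'a::semiring_1"
  by (intro eq_vecI) (auto simp: lower_mat_def unit_vec_def)

lemma col_raise_mat:
  "j < n \<Longrightarrow> col (raise_mat n :: 'a::semiring_1 mat) j =
     (if Suc j < n then unit_vec n (Suc j) else 0\<^sub>v n)"
  by (intro eq_vecI) (auto simp: raise_mat_def unit_vec_def)

lemma mult_lower_mat_iff:
  fixes X P :: "'a::field mat"
  assumes "X \<in> carrier_mat n n" "P \<in> carrier_mat n n"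
  shows "X * P = P * lower_mat n f \<longleftrightarrow>
    (\<forall>i<n. X *\<^sub>v col P i = (if i = 0 then 0\<^sub>v n else f i \<cdot>\<^sub>v col P (i - 1)))"
proof -
  have cols: "col (X * P) i = X *\<^sub>v col P i"
    "col (P * lower_mat n f) i = (if i = 0 then 0\<^sub>v n else f i \<cdot>\<^sub>v col P (i - 1))" if "i < n" for i
    using assms that col_mult2[OF assms that] col_mult2[OF assms(2) lower_mat_carrier that]
    by (auto simp: col_lower_mat mult_mat_vec mult_unit_vec)
  show ?thesis
  proof
    assume "X * P = P * lower_mat n f"
    then show "\<forall>i<n. X *\<^sub>v col P i = (if i = 0 then 0\<^sub>v n else f i \<cdot>\<^sub>v col P (i - 1))"
      using cols by metis
  next
    assume h: "\<forall>i<n. X *\<^sub>v col P i = (if i = 0 then 0\<^sub>v n else f i \<cdot>\<^sub>v col P (i - 1))"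
    then show "X * P = P * lower_mat n f"
    proof (intro mat_col_eqI)
      fix i assume "i < dim_col (P * lower_mat n f)"
      then have "i < n" by simp
      then show "col (X * P) i = col (P * lower_mat n f) i" using cols[OF \<open>i < n\<close>] h by metis
    qed (use assms in auto)
  qed
qed

lemma mult_raise_mat_iff:
  fixes Y P :: "'a::field mat"
  assumes "Y \<in> carrier_mat n n" "P \<in> carrier_mat n n"
  shows "Y * P = P * raise_mat n \<longleftrightarrow>
    (\<forall>i<n. Y *\<^sub>v col P i = (if Suc i < n then col P (Suc i) else 0\<^sub>v n))"
proof -
  have cols: "col (Y * P) i = Y *\<^sub>v col P i"
    "col (P * raise_mat n) i = (if Suc i < n then col P (Suc i) else 0\<^sub>v n)" if "i < n" for i
    using assms that col_mult2[OF assms that] col_mult2[OF assms(2) raise_mat_carrier that]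
    by (auto simp: col_raise_mat mult_unit_vec)
  show ?thesis
  proof
    assume "Y * P = P * raise_mat n"
    then show "\<forall>i<n. Y *\<^sub>v col P i = (if Suc i < n then col P (Suc i) else 0\<^sub>v n)"
      using cols by metis
  next
    assume h: "\<forall>i<n. Y *\<^sub>v col P i = (if Suc i < n then col P (Suc i) else 0\<^sub>v n)"
    then show "Y * P = P * raise_mat n"
    proof (intro mat_col_eqI)
      fix i assume "i < dim_col (P * raise_mat n)"
      then have "i < n" by simp
      then show "col (Y * P) i = col (P * raise_mat n) i" using cols[OF \<open>i < n\<close>] h by metis
    qed (use assms in auto)
  qed
qed

lemma mult_col_of_lower_mat:
  fixes X P :: "'a::field mat"
  assumes "X \<in> carrier_mat n n" "P \<in> carrier_mat n n" "X * P = P * lower_mat n f" "i < n"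
  shows "X *\<^sub>v col P i = (if i = 0 then 0\<^sub>v n else f i \<cdot>\<^sub>v col P (i - 1))"
  using mult_lower_mat_iff[OF assms(1,2)] assms(3,4) by blast

lemma mult_col_of_raise_mat:
  fixes Y P :: "'a::field mat"
  assumes "Y \<in> carrier_mat n n" "P \<in> carrier_mat n n" "Y * P = P * raise_mat n" "i < n"
  shows "Y *\<^sub>v col P i = (if Suc i < n then col P (Suc i) else 0\<^sub>v n)"
  using mult_raise_mat_iff[OF assms(1,2)] assms(3,4) by blast

lemma kernel_of_lower_mat:
  fixes X P Q :: "'a::field mat"
  assumes PQ: "inverse_mats n P Q" and X: "X \<in> carrier_mat n n"
    and XP: "X * P = P * lower_mat n f" and f: "\<forall>j. 1 \<le> j \<and> j < n \<longrightarrow> f j \<noteq> 0"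
    and x: "x \<in> carrier_vec n" "X *\<^sub>v x = 0\<^sub>v n" and n: "0 < n"
  shows "x = (Q *\<^sub>v x) $ 0 \<cdot>\<^sub>v col P 0"
proof -
  define c where "c = Q *\<^sub>v x"
  have P: "P \<in> carrier_mat n n" "Q \<in> carrier_mat n n" and c: "c \<in> carrier_vec n"
    using PQ x unfolding inverse_mats_def c_def by auto
  have x_eq: "x = P *\<^sub>v c"
    using inverse_mats_cancel_vec[OF inverse_mats_sym[OF PQ] x(1), symmetric] unfolding c_def .
  have "X *\<^sub>v x = (X * P) *\<^sub>v c" using X P c x_eq by simp
  also have "\<dots> = P *\<^sub>v (lower_mat n f *\<^sub>v c)"
    unfolding XP by (rule assoc_mult_mat_vec[OF P(1) lower_mat_carrier c])
  finally have "P *\<^sub>v (lower_mat n f *\<^sub>v c) = X *\<^sub>v x" ..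
  then have lz: "lower_mat n f *\<^sub>v c = 0\<^sub>v n"
    using inverse_mats_cancel_vec[OF PQ mult_mat_vec_carrier[OF lower_mat_carrier[of n f] c]] x(2) P
    by (simp add: carrier_matD)
  have "c $ j = 0" if "1 \<le> j" "j < n" for j
  proof -
    have "(lower_mat n f *\<^sub>v c) $ (j - 1) = f j * c $ j"
      using that c by (simp add: lower_mat_mult_vec)
    then show ?thesis using lz that f by simp
  qed
  then have "c = c $ 0 \<cdot>\<^sub>v unit_vec n 0"
    using c by (intro eq_vecI) (auto simp: unit_vec_def)
  then have "x = c $ 0 \<cdot>\<^sub>v (P *\<^sub>v unit_vec n 0)"
    using x_eq mult_mat_vec[OF P(1) unit_vec_carrier] by metis
  then show ?thesis using P(1) n by (simp add: mult_unit_vec c_def)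
qed

lemma raise_mat_preimage_last:
  fixes Y P Q :: "'a::field mat"
  assumes PQ: "inverse_mats (Suc d) P Q" and Y: "Y \<in> carrier_mat (Suc d) (Suc d)"
    and YP: "Y * P = P * raise_mat (Suc d)" and d: "1 \<le> d"
    and w: "w \<in> carrier_vec (Suc d)" and Yw: "Y *\<^sub>v w = c \<cdot>\<^sub>v col P d"
  shows "w = (Q *\<^sub>v w) $ d \<cdot>\<^sub>v col P d + c \<cdot>\<^sub>v col P (d - 1)"
proof -
  define m where "m = Q *\<^sub>v w"
  have P: "P \<in> carrier_mat (Suc d) (Suc d)" "Q \<in> carrier_mat (Suc d) (Suc d)"
    using PQ unfolding inverse_mats_def by auto
  have m: "m \<in> carrier_vec (Suc d)" using P(2) w unfolding m_def by simp
  have w_eq: "w = P *\<^sub>v m"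
    using inverse_mats_cancel_vec[OF inverse_mats_sym[OF PQ] w] unfolding m_def by simp
  have "P *\<^sub>v (raise_mat (Suc d) *\<^sub>v m) = (Y * P) *\<^sub>v m"
    unfolding YP by (rule assoc_mult_mat_vec[OF P(1) raise_mat_carrier m, symmetric])
  also have "\<dots> = c \<cdot>\<^sub>v col P d" using Y P m w_eq Yw by simp
  also have "\<dots> = P *\<^sub>v (c \<cdot>\<^sub>v unit_vec (Suc d) d)"
    using P by (simp add: mult_mat_vec mult_unit_vec)
  finally have raise_m: "raise_mat (Suc d) *\<^sub>v m = c \<cdot>\<^sub>v unit_vec (Suc d) d"
    using inverse_mats_cancel_vec[OF PQ] m by (metis mult_mat_vec_carrier raise_mat_carrier smult_carrier_vec
        unit_vec_carrier)
  have m_below: "m $ i = (if Suc i = d then c else 0)" if "i < d" for i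
  proof -
    have "(raise_mat (Suc d) *\<^sub>v m) $ Suc i = m $ i" using that m by (simp add: raise_mat_mult_vec)
    moreover have "(c \<cdot>\<^sub>v unit_vec (Suc d) d) $ Suc i = (if Suc i = d then c else 0)" using that by simp
    ultimately show ?thesis using raise_m by simp
  qed
  have m_eq: "m = m $ d \<cdot>\<^sub>v unit_vec (Suc d) d + c \<cdot>\<^sub>v unit_vec (Suc d) (d - 1)"
  proof (rule eq_vecI)
    fix i assume "i < dim_vec (m $ d \<cdot>\<^sub>v unit_vec (Suc d) d + c \<cdot>\<^sub>v unit_vec (Suc d) (d - 1))"
    then have i: "i < Suc d" by simp
    show "m $ i = (m $ d \<cdot>\<^sub>v unit_vec (Suc d) d + c \<cdot>\<^sub>v unit_vec (Suc d) (d - 1)) $ i"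
    proof (cases "i = d")
      case True
      then show ?thesis using d by (simp add: unit_vec_def)
    next
      case False
      then have "i < d" using i by simp
      then show ?thesis using m_below[OF \<open>i < d\<close>] i by (auto simp: unit_vec_def)
    qed
  qed (use m in simp)
  have "w = P *\<^sub>v (m $ d \<cdot>\<^sub>v unit_vec (Suc d) d) + P *\<^sub>v (c \<cdot>\<^sub>v unit_vec (Suc d) (d - 1))"
    using w_eq arg_cong[OF m_eq, of "\<lambda>v. P *\<^sub>v v"] mult_add_distrib_mat_vec[OF P(1)] by simp
  then show ?thesis using P(1) by (simp add: mult_mat_vec mult_unit_vec m_def)
qed

lemma lower_raise_coordinates:
  fixes A C R Ri :: "'a::field mat"
  assumes RRi: "inverse_mats n R Ri" and A: "A \<in> carrier_mat n n" and C: "C \<in> carrier_mat n n"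
    and CR: "C * R = R * lower_mat n \<phi>" and AR: "A * R = R * raise_mat n"
    and z: "z \<in> carrier_vec n" and Cz: "C *\<^sub>v z = a \<cdot>\<^sub>v z + \<kappa> \<cdot>\<^sub>v (A *\<^sub>v z)"
  shows "lower_mat n \<phi> *\<^sub>v (Ri *\<^sub>v z) = a \<cdot>\<^sub>v (Ri *\<^sub>v z) + \<kappa> \<cdot>\<^sub>v (raise_mat n *\<^sub>v (Ri *\<^sub>v z))"
proof -
  define c where "c = Ri *\<^sub>v z"
  have R: "R \<in> carrier_mat n n" "Ri \<in> carrier_mat n n" using RRi unfolding inverse_mats_def by auto
  have c: "c \<in> carrier_vec n" using R z unfolding c_def by simp
  have rc: "raise_mat n *\<^sub>v c \<in> carrier_vec n" "lower_mat n \<phi> *\<^sub>v c \<in> carrier_vec n"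
    by simp_all
  have z_eq: "z = R *\<^sub>v c"
    using inverse_mats_cancel_vec[OF inverse_mats_sym[OF RRi] z] unfolding c_def by simp
  have "R *\<^sub>v (lower_mat n \<phi> *\<^sub>v c) = (C * R) *\<^sub>v c"
    unfolding CR by (rule assoc_mult_mat_vec[OF R(1) lower_mat_carrier c, symmetric])
  also have "\<dots> = a \<cdot>\<^sub>v (R *\<^sub>v c) + \<kappa> \<cdot>\<^sub>v ((A * R) *\<^sub>v c)"
    using Cz unfolding z_eq assoc_mult_mat_vec[OF C R(1) c] assoc_mult_mat_vec[OF A R(1) c] .
  also have "(A * R) *\<^sub>v c = R *\<^sub>v (raise_mat n *\<^sub>v c)"
    unfolding AR by (rule assoc_mult_mat_vec[OF R(1) raise_mat_carrier c])
  also have "a \<cdot>\<^sub>v (R *\<^sub>v c) + \<kappa> \<cdot>\<^sub>v (R *\<^sub>v (raise_mat n *\<^sub>v c))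
      = R *\<^sub>v (a \<cdot>\<^sub>v c + \<kappa> \<cdot>\<^sub>v (raise_mat n *\<^sub>v c))"
    unfolding mult_add_distrib_mat_vec[OF R(1) smult_carrier_vec[THEN iffD2, OF c]
        smult_carrier_vec[THEN iffD2, OF rc(1)]] mult_mat_vec[OF R(1) c] mult_mat_vec[OF R(1) rc(1)] ..
  finally have "Ri *\<^sub>v (R *\<^sub>v (lower_mat n \<phi> *\<^sub>v c)) = Ri *\<^sub>v (R *\<^sub>v (a \<cdot>\<^sub>v c + \<kappa> \<cdot>\<^sub>v (raise_mat n *\<^sub>v c)))"
    by (rule arg_cong)
  then show ?thesis
    unfolding c_def[symmetric] inverse_mats_cancel_vec[OF RRi rc(2)]
      inverse_mats_cancel_vec[OF RRi add_carrier_vec[OF smult_carrier_vec[THEN iffD2, OF c]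
        smult_carrier_vec[THEN iffD2, OF rc(1)]]] .
qed

lemma lower_raise_solution_unique:
  fixes c c' :: "'a::field vec"
  assumes \<phi>: "\<forall>j. 1 \<le> j \<and> j < n \<longrightarrow> \<phi> j \<noteq> 0"
    and c: "c \<in> carrier_vec n" "c' \<in> carrier_vec n"
    and sol: "lower_mat n \<phi> *\<^sub>v c = a \<cdot>\<^sub>v c + \<kappa> \<cdot>\<^sub>v (raise_mat n *\<^sub>v c)"
      "lower_mat n \<phi> *\<^sub>v c' = a \<cdot>\<^sub>v c' + \<kappa> \<cdot>\<^sub>v (raise_mat n *\<^sub>v c')"
    and c0: "c $ 0 = c' $ 0"
  shows "c = c'"
proof -
  have step: "\<phi> (Suc j) * v $ Suc j = a * v $ j + \<kappa> * (if j = 0 then 0 else v $ (j - 1))"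
    if "Suc j < n" "v \<in> carrier_vec n" "lower_mat n \<phi> *\<^sub>v v = a \<cdot>\<^sub>v v + \<kappa> \<cdot>\<^sub>v (raise_mat n *\<^sub>v v)"
    for v :: "'a vec" and j
  proof -
    have "(lower_mat n \<phi> *\<^sub>v v) $ j = (a \<cdot>\<^sub>v v + \<kappa> \<cdot>\<^sub>v (raise_mat n *\<^sub>v v)) $ j"
      using that(3) by simp
    then show ?thesis using that(1,2) by (simp add: lower_mat_mult_vec raise_mat_mult_vec)
  qed
  have "c $ m = c' $ m" if "m < n" for m
    using that
  proof (induction m rule: less_induct)
    case (less m)
    show ?case
    proof (cases m)
      case 0
      then show ?thesis using c0 by simp
    next
      case (Suc j)
      have "\<phi> (Suc j) * c $ Suc j = \<phi> (Suc j) * c' $ Suc j"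
        using step[OF _ c(1) sol(1), of j] step[OF _ c(2) sol(2), of j]
          less.IH[of j] less.IH[of "j - 1"] less.prems Suc by simp
      then show ?thesis using \<phi> less.prems Suc by simp
    qed
  qed
  then show ?thesis using c by (intro eq_vecI) auto
qed

lemma lower_raise_solutions_proportional:
  fixes c c' :: "'a::field vec"
  assumes \<phi>: "\<forall>j. 1 \<le> j \<and> j < n \<longrightarrow> \<phi> j \<noteq> 0"
    and c: "c \<in> carrier_vec n" "c' \<in> carrier_vec n"
    and sol: "lower_mat n \<phi> *\<^sub>v c = a \<cdot>\<^sub>v c + \<kappa> \<cdot>\<^sub>v (raise_mat n *\<^sub>v c)"
      "lower_mat n \<phi> *\<^sub>v c' = a \<cdot>\<^sub>v c' + \<kappa> \<cdot>\<^sub>v (raise_mat n *\<^sub>v c')"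
    and c'_nz: "c' \<noteq> 0\<^sub>v n"
  shows "c = (c $ 0 / c' $ 0) \<cdot>\<^sub>v c'"
proof -
  have sol_smult: "lower_mat n \<phi> *\<^sub>v (s \<cdot>\<^sub>v c') = a \<cdot>\<^sub>v (s \<cdot>\<^sub>v c') + \<kappa> \<cdot>\<^sub>v (raise_mat n *\<^sub>v (s \<cdot>\<^sub>v c'))"
    for s
  proof -
    have "lower_mat n \<phi> *\<^sub>v (s \<cdot>\<^sub>v c') = s \<cdot>\<^sub>v (a \<cdot>\<^sub>v c' + \<kappa> \<cdot>\<^sub>v (raise_mat n *\<^sub>v c'))"
      using sol(2) mult_mat_vec[OF lower_mat_carrier c(2)] by simp
    also have "\<dots> = a \<cdot>\<^sub>v (s \<cdot>\<^sub>v c') + \<kappa> \<cdot>\<^sub>v (raise_mat n *\<^sub>v (s \<cdot>\<^sub>v c'))"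
      using smult_add_distrib_vec[of "a \<cdot>\<^sub>v c'" n "\<kappa> \<cdot>\<^sub>v (raise_mat n *\<^sub>v c')" s] c(2)
        mult_mat_vec[OF raise_mat_carrier c(2)]
      by (simp add: smult_smult_assoc mult.commute)
    finally show ?thesis .
  qed
  have "0 < n" using c'_nz c(2) by (cases n) auto
  have "c' $ 0 \<noteq> 0"
  proof
    assume "c' $ 0 = 0"
    then have "c' = 0 \<cdot>\<^sub>v c'"
      using lower_raise_solution_unique[OF \<phi> c(2) _ sol(2) sol_smult[of 0]] c(2) \<open>0 < n\<close> by simp
    then show False using c'_nz c(2) by simp
  qed
  then show ?thesis
    using lower_raise_solution_unique[OF \<phi> c(1) _ sol(1) sol_smult, of "c $ 0 / c' $ 0"] c(2) \<open>0 < n\<close>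
    by simp
qed

lemma intertwiner_maps_lower_basis:
  fixes S A A' P P' :: "'a::field mat"
  assumes S: "S \<in> carrier_mat n n" and A: "A \<in> carrier_mat n n" "A' \<in> carrier_mat n n"
    and P: "P \<in> carrier_mat n n" "P' \<in> carrier_mat n n" and SA: "S * A = A' * S"
    and AP: "A * P = P * lower_mat n \<phi>" "A' * P' = P' * lower_mat n \<phi>"
    and \<phi>: "\<forall>j. 1 \<le> j \<and> j < n \<longrightarrow> \<phi> j \<noteq> 0" and n: "n = Suc d"
    and last: "S *\<^sub>v col P d = s \<cdot>\<^sub>v col P' d"
  shows "S * P = s \<cdot>\<^sub>m P'"
proof -
  have step: "S *\<^sub>v col P (j - 1) = s \<cdot>\<^sub>v col P' (j - 1)"
    if j: "1 \<le> j" "j < n" and IH: "S *\<^sub>v col P j = s \<cdot>\<^sub>v col P' j" for j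
  proof (rule smult_vec_cancel_left)
    show "\<phi> j \<noteq> 0" using \<phi> j by simp
    have j': "j - 1 < n" using j by simp
    have "\<phi> j \<cdot>\<^sub>v (S *\<^sub>v col P (j - 1)) = S *\<^sub>v (\<phi> j \<cdot>\<^sub>v col P (j - 1))"
      by (rule mult_mat_vec[OF S col_carrier_vec[OF j' P(1)], symmetric])
    also have "\<phi> j \<cdot>\<^sub>v col P (j - 1) = A *\<^sub>v col P j"
      using mult_col_of_lower_mat[OF A(1) P(1) AP(1) j(2)] j by simp
    also have "S *\<^sub>v (A *\<^sub>v col P j) = A' *\<^sub>v (S *\<^sub>v col P j)"
      by (metis SA assoc_mult_mat_vec[OF S A(1) col_carrier_vec[OF j(2) P(1)]]
          assoc_mult_mat_vec[OF A(2) S col_carrier_vec[OF j(2) P(1)]])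
    also have "\<dots> = s \<cdot>\<^sub>v (A' *\<^sub>v col P' j)"
      unfolding IH by (rule mult_mat_vec[OF A(2) col_carrier_vec[OF j(2) P(2)]])
    also have "A' *\<^sub>v col P' j = \<phi> j \<cdot>\<^sub>v col P' (j - 1)"
      using mult_col_of_lower_mat[OF A(2) P(2) AP(2) j(2)] j by simp
    finally show "\<phi> j \<cdot>\<^sub>v (S *\<^sub>v col P (j - 1)) = \<phi> j \<cdot>\<^sub>v (s \<cdot>\<^sub>v col P' (j - 1))"
      by (simp add: smult_smult_assoc mult.commute)
  qed
  have "S *\<^sub>v col P (d - k) = s \<cdot>\<^sub>v col P' (d - k)" if "k \<le> d" for k
    using that
  proof (induction k)
    case (Suc k)
    then have "S *\<^sub>v col P (d - k - 1) = s \<cdot>\<^sub>v col P' (d - k - 1)"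
      using step[of "d - k"] n by simp
    then show ?case by simp
  qed (use last in simp)
  then have cols: "S *\<^sub>v col P j = s \<cdot>\<^sub>v col P' j" if "j < n" for j
    using \<open>\<And>k. k \<le> d \<Longrightarrow> _\<close>[of "d - j"] that n by simp
  show ?thesis
  proof (rule mat_col_eqI)
    fix j assume "j < dim_col (s \<cdot>\<^sub>m P')"
    then have j: "j < n" using P(2) by simp
    have "col (S * P) j = S *\<^sub>v col P j" by (rule col_mult2[OF S P(1) j])
    also have "\<dots> = col (s \<cdot>\<^sub>m P') j" using cols[OF j] P(2) j by simp
    finally show "col (S * P) j = col (s \<cdot>\<^sub>m P') j" .
  qed (use S P in auto)
qed

lemma intertwines_raise_mat:
  fixes S B B' P Q P' :: "'a::field mat"
  assumes PQ: "inverse_mats n P Q" and S: "S \<in> carrier_mat n n"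
    and B: "B \<in> carrier_mat n n" "B' \<in> carrier_mat n n" and P': "P' \<in> carrier_mat n n"
    and BP: "B * P = P * raise_mat n" "B' * P' = P' * raise_mat n" and SP: "S * P = s \<cdot>\<^sub>m P'"
  shows "S * B = B' * S"
proof -
  have P: "P \<in> carrier_mat n n" using PQ unfolding inverse_mats_def by simp
  have "S * B * P = S * (B * P)" by (rule assoc_mult_mat[OF S B(1) P])
  also have "\<dots> = (S * P) * raise_mat n"
    unfolding BP(1) by (rule assoc_mult_mat[OF S P raise_mat_carrier, symmetric])
  also have "\<dots> = s \<cdot>\<^sub>m (B' * P')"
    unfolding SP BP(2) by (rule mult_smult_assoc_mat[OF P' raise_mat_carrier])
  also have "\<dots> = B' * (S * P)"
    unfolding SP by (rule mult_smult_distrib[OF B(2) P', symmetric])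
  also have "\<dots> = B' * S * P" by (rule assoc_mult_mat[OF B(2) S P, symmetric])
  finally show ?thesis
    using inverse_mats_cancel_right[OF PQ mult_carrier_mat[OF S B(1)] mult_carrier_mat[OF B(2) S]] by blast
qed

section \<open>Bases adapted to an LR pair\<close>

text \<open>The columns \<open>v\<^sub>0, \<dots>, v\<^sub>d\<close> of \<open>P\<close> span the components of the \<open>(X,Y)\<close>-decomposition, with
  \<open>Y v\<^bsub>i-1\<^esub> = v\<^sub>i\<close> and \<open>X v\<^sub>i = \<phi>\<^sub>i v\<^bsub>i-1\<^esub>\<close>; \<open>Q\<close> is the inverse of \<open>P\<close>.\<close>

definition LR_basis :: "nat \<Rightarrow> 'a::field mat \<Rightarrow> 'a mat \<Rightarrow> 'a mat \<Rightarrow> 'a mat \<Rightarrow> bool" where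
  "LR_basis n X Y P Q \<longleftrightarrow> inverse_mats n P Q \<and> LR_dec n X Y = map (\<lambda>i. line (col P i)) [0..<n] \<and>
     X * P = P * lower_mat n (param_seq n X Y) \<and> Y * P = P * raise_mat n"

lemma LR_basisD:
  assumes "LR_basis n X Y P Q"
  shows "inverse_mats n P Q" "P \<in> carrier_mat n n" "LR_dec n X Y = map (\<lambda>i. line (col P i)) [0..<n]"
    "X * P = P * lower_mat n (param_seq n X Y)" "Y * P = P * raise_mat n"
  using assms unfolding LR_basis_def inverse_mats_def by auto

lemma decomposition_obtain_inverse_mats:
  assumes "decomposition n Vs"
  obtains P Q :: "'a::field mat"
    where "inverse_mats n P Q" "Vs = map (\<lambda>i. line (col P i)) [0..<n]"
proof -
  from assms obtain P where P: "P \<in> carrier_mat n n" "invertible_mat P" "length Vs = n"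
    "\<forall>i<n. Vs ! i = line (col P i)"
    unfolding decomposition_def line_def by blast
  obtain Q where "inverse_mats n P Q"
    using invertible_mat_obtain_inverse[OF P(1,2)] .
  moreover have "Vs = map (\<lambda>i. line (col P i)) [0..<n]"
    using P(3,4) by (intro nth_equalityI) auto
  ultimately show ?thesis using that by blast
qed

lemma lowers_raises_col_scalars:
  fixes X Y P Q :: "'a::field mat"
  assumes PQ: "inverse_mats n P Q" and X: "X \<in> carrier_mat n n" and Y: "Y \<in> carrier_mat n n"
    and low: "lowers n X (map (\<lambda>i. line (col P i)) [0..<n])"
    and rai: "raises n Y (map (\<lambda>i. line (col P i)) [0..<n])" and n: "0 < n"
  obtains \<mu> \<nu> where "\<forall>i. 1 \<le> i \<and> i < n \<longrightarrow> \<mu> i \<noteq> 0 \<and> X *\<^sub>v col P i = \<mu> i \<cdot>\<^sub>v col P (i - 1)"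
    "X *\<^sub>v col P 0 = 0\<^sub>v n"
    "\<forall>i. Suc i < n \<longrightarrow> \<nu> i \<noteq> 0 \<and> Y *\<^sub>v col P i = \<nu> i \<cdot>\<^sub>v col P (Suc i)"
    "Y *\<^sub>v col P (n - 1) = 0\<^sub>v n"
proof -
  have P: "P \<in> carrier_mat n n" using PQ unfolding inverse_mats_def by simp
  have "\<exists>m. 1 \<le> i \<and> i < n \<longrightarrow> m \<noteq> 0 \<and> X *\<^sub>v col P i = m \<cdot>\<^sub>v col P (i - 1)" for i
  proof (cases "1 \<le> i \<and> i < n")
    case True
    then have i: "i < n" "i - 1 < n" by auto
    have "(\<lambda>x. X *\<^sub>v x) ` line (col P i) = line (col P (i - 1))"
      using low True unfolding lowers_def by auto
    then obtain m where "m \<noteq> 0" "X *\<^sub>v col P i = m \<cdot>\<^sub>v col P (i - 1)"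
      by (rule image_line_eq_line[OF X col_carrier_vec[OF i(1) P] inverse_mats_col_nonzero[OF PQ i(2)]])
    then show ?thesis by blast
  qed blast
  then obtain \<mu> where \<mu>: "\<forall>i. 1 \<le> i \<and> i < n \<longrightarrow> \<mu> i \<noteq> 0 \<and> X *\<^sub>v col P i = \<mu> i \<cdot>\<^sub>v col P (i - 1)"
    by metis
  have "\<exists>m. Suc i < n \<longrightarrow> m \<noteq> 0 \<and> Y *\<^sub>v col P i = m \<cdot>\<^sub>v col P (Suc i)" for i
  proof (cases "Suc i < n")
    case True
    then have i: "i < n" by simp
    have "(\<lambda>x. Y *\<^sub>v x) ` line (col P i) = line (col P (Suc i))"
      using rai True unfolding raises_def by auto
    then obtain m where "m \<noteq> 0" "Y *\<^sub>v col P i = m \<cdot>\<^sub>v col P (Suc i)"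
      by (rule image_line_eq_line[OF Y col_carrier_vec[OF i P] inverse_mats_col_nonzero[OF PQ True]])
    then show ?thesis by blast
  qed blast
  then obtain \<nu> where \<nu>: "\<forall>i. Suc i < n \<longrightarrow> \<nu> i \<noteq> 0 \<and> Y *\<^sub>v col P i = \<nu> i \<cdot>\<^sub>v col P (Suc i)"
    by metis
  have "(\<lambda>x. X *\<^sub>v x) ` line (col P 0) = {0\<^sub>v n}" "(\<lambda>x. Y *\<^sub>v x) ` line (col P (n - 1)) = {0\<^sub>v n}"
    using low rai n unfolding lowers_def raises_def by auto
  then have "X *\<^sub>v col P 0 = 0\<^sub>v n" "Y *\<^sub>v col P (n - 1) = 0\<^sub>v n"
    using line_self by blast+
  with \<mu> \<nu> that show ?thesis by blast
qed

lemma rescale_cols_to_lower_raise: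
  fixes X Y P Q :: "'a::field mat"
  assumes PQ: "inverse_mats n P Q" and X: "X \<in> carrier_mat n n" and Y: "Y \<in> carrier_mat n n"
    and \<mu>: "\<forall>i. 1 \<le> i \<and> i < n \<longrightarrow> \<mu> i \<noteq> 0 \<and> X *\<^sub>v col P i = \<mu> i \<cdot>\<^sub>v col P (i - 1)"
    and X0: "X *\<^sub>v col P 0 = 0\<^sub>v n"
    and \<nu>: "\<forall>i. Suc i < n \<longrightarrow> \<nu> i \<noteq> 0 \<and> Y *\<^sub>v col P i = \<nu> i \<cdot>\<^sub>v col P (Suc i)"
    and Yl: "Y *\<^sub>v col P (n - 1) = 0\<^sub>v n"
  obtains P' Q' \<phi> where "inverse_mats n P' Q'" "X * P' = P' * lower_mat n \<phi>"
    "Y * P' = P' * raise_mat n" "\<forall>j. 1 \<le> j \<and> j < n \<longrightarrow> \<phi> j \<noteq> 0"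
    "\<forall>i<n. line (col P' i) = line (col P i)"
proof -
  have P: "P \<in> carrier_mat n n" using PQ unfolding inverse_mats_def by simp
  \<comment> \<open>rescaling column \<open>i\<close> by \<open>\<nu>\<^sub>0 \<cdots> \<nu>\<^bsub>i-1\<^esub>\<close> makes \<open>Y\<close> map each column exactly onto the next\<close>
  define g where "g i = (\<Prod>k<i. \<nu> k)" for i
  have g_nz: "g i \<noteq> 0" if "i < n" for i
    using \<nu> that unfolding g_def by (auto simp: prod_zero_iff)
  have g_Suc: "g (Suc i) = g i * \<nu> i" for i unfolding g_def by simp
  define \<phi> where "\<phi> j = \<mu> j * g j / g (j - 1)" for j
  define P' where "P' = P * mat_diag n g"
  have PQ': "inverse_mats n P' (mat_diag n (\<lambda>i. 1 / g i) * Q)"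
    unfolding P'_def using inverse_mats_scale_cols(1)[OF PQ g_nz] .
  have P': "P' \<in> carrier_mat n n" using PQ' unfolding inverse_mats_def by simp
  have col_P': "col P' i = g i \<cdot>\<^sub>v col P i" if "i < n" for i
    unfolding P'_def using inverse_mats_scale_cols(2)[OF PQ g_nz that] .
  have X_col_P': "X *\<^sub>v col P' i = g i \<cdot>\<^sub>v (X *\<^sub>v col P i)"
    and Y_col_P': "Y *\<^sub>v col P' i = g i \<cdot>\<^sub>v (Y *\<^sub>v col P i)" if "i < n" for i
    using col_P'[OF that] mult_mat_vec[OF X col_carrier_vec[OF that P]]
      mult_mat_vec[OF Y col_carrier_vec[OF that P]] by simp_all
  have "X *\<^sub>v col P' i = (if i = 0 then 0\<^sub>v n else \<phi> i \<cdot>\<^sub>v col P' (i - 1))" if i: "i < n" for i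
  proof (cases "i = 0")
    case True
    then show ?thesis using X_col_P'[OF i] X0 by simp
  next
    case False
    then have "X *\<^sub>v col P' i = (g i * \<mu> i) \<cdot>\<^sub>v col P (i - 1)"
      using X_col_P'[OF i] \<mu> i by (simp add: smult_smult_assoc)
    also have "g i * \<mu> i = \<phi> i * g (i - 1)"
      using g_nz[of "i - 1"] i unfolding \<phi>_def by simp
    finally show ?thesis using col_P'[of "i - 1"] False i by (simp add: smult_smult_assoc)
  qed
  then have "X * P' = P' * lower_mat n \<phi>"
    using mult_lower_mat_iff[OF X P'] by blast
  moreover have "Y *\<^sub>v col P' i = (if Suc i < n then col P' (Suc i) else 0\<^sub>v n)" if i: "i < n" for i
  proof (cases "Suc i < n")
    case True
    then show ?thesis
      using Y_col_P'[OF i] \<nu> col_P'[OF True] by (simp add: g_Suc smult_smult_assoc)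
  next
    case False
    then have "i = n - 1" using i by simp
    then show ?thesis using Y_col_P'[OF i] Yl False by simp
  qed
  then have "Y * P' = P' * raise_mat n"
    using mult_raise_mat_iff[OF Y P'] by blast
  moreover have "\<forall>j. 1 \<le> j \<and> j < n \<longrightarrow> \<phi> j \<noteq> 0"
    using \<mu> g_nz unfolding \<phi>_def by auto
  moreover have "\<forall>i<n. line (col P' i) = line (col P i)"
    using col_P' g_nz by (simp add: line_smult)
  ultimately show ?thesis using that PQ' by blast
qed

lemma lowered_raised_decomposition_unique:
  fixes X Y P Q :: "'a::field mat"
  assumes PQ: "inverse_mats n P Q" and X: "X \<in> carrier_mat n n"
    and XP: "X * P = P * lower_mat n \<phi>" and \<phi>: "\<forall>j. 1 \<le> j \<and> j < n \<longrightarrow> \<phi> j \<noteq> 0"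
    and Vs: "Vs = map (\<lambda>i. line (col P i)) [0..<n]" "raises n Y Vs"
    and Ws: "decomposition n Ws" "lowers n X Ws" "raises n Y Ws" and n: "0 < n"
  shows "Ws = Vs"
proof -
  obtain P1 Q1 where P1Q1: "inverse_mats n P1 Q1" and Ws_eq: "Ws = map (\<lambda>i. line (col P1 i)) [0..<n]"
    using decomposition_obtain_inverse_mats[OF Ws(1)] .
  have P1: "P1 \<in> carrier_mat n n" using P1Q1 unfolding inverse_mats_def by simp
  have "(\<lambda>x. X *\<^sub>v x) ` line (col P1 0) = {0\<^sub>v n}"
    using Ws(2) n unfolding lowers_def Ws_eq by simp
  then have "X *\<^sub>v col P1 0 = 0\<^sub>v n" using line_self by blast
  then have "col P1 0 = (Q *\<^sub>v col P1 0) $ 0 \<cdot>\<^sub>v col P 0"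
    by (rule kernel_of_lower_mat[OF PQ X XP \<phi> col_carrier_vec[OF n P1] _ n])
  moreover have "col P1 0 \<noteq> 0\<^sub>v n" using inverse_mats_col_nonzero[OF P1Q1 n] .
  ultimately have "(Q *\<^sub>v col P1 0) $ 0 \<noteq> 0" using PQ by (auto simp: inverse_mats_def carrier_matD)
  then have "line (col P1 0) = line (col P 0)" using \<open>col P1 0 = _\<close> line_smult by metis
  then have "Ws ! 0 = Vs ! 0" using n unfolding Ws_eq Vs(1) by simp
  moreover have "Ws ! i = Vs ! i \<Longrightarrow> Ws ! Suc i = Vs ! Suc i" if "Suc i < n" for i
  proof -
    assume "Ws ! i = Vs ! i"
    have "Ws ! Suc i = (\<lambda>x. Y *\<^sub>v x) ` (Ws ! i)" "Vs ! Suc i = (\<lambda>x. Y *\<^sub>v x) ` (Vs ! i)"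
      using Ws(3) Vs(2) that unfolding raises_def by auto
    then show "Ws ! Suc i = Vs ! Suc i" using \<open>Ws ! i = Vs ! i\<close> by simp
  qed
  ultimately have "Ws ! i = Vs ! i" if "i < n" for i
    using that by (induction i) (simp_all add: Suc_lessD)
  then show ?thesis using Ws_eq Vs(1) by (intro nth_equalityI) auto
qed

lemma param_seq_eqI:
  fixes X Y :: "'a::field mat"
  assumes "LR_dec n X Y ! i = line v" "v \<in> carrier_vec n" "v \<noteq> 0\<^sub>v n"
    and "X \<in> carrier_mat n n" "Y \<in> carrier_mat n n" "(Y * X) *\<^sub>v v = c \<cdot>\<^sub>v v"
  shows "param_seq n X Y i = c"
  unfolding param_seq_def
proof (rule the_equality)
  have YX: "Y * X \<in> carrier_mat n n" using assms(4,5) by simp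
  show "\<forall>x \<in> LR_dec n X Y ! i. (Y * X) *\<^sub>v x = c \<cdot>\<^sub>v x"
  proof
    fix x assume "x \<in> LR_dec n X Y ! i"
    then obtain a where x: "x = a \<cdot>\<^sub>v v" using assms(1) unfolding line_def by auto
    show "(Y * X) *\<^sub>v x = c \<cdot>\<^sub>v x"
      unfolding x mult_mat_vec[OF YX assms(2)] assms(6) by (simp add: smult_smult_assoc mult.commute)
  qed
next
  fix c' assume "\<forall>x \<in> LR_dec n X Y ! i. (Y * X) *\<^sub>v x = c' \<cdot>\<^sub>v x"
  then have "c' \<cdot>\<^sub>v v = c \<cdot>\<^sub>v v" using assms(1,6) line_self by metis
  then show "c' = c" using smult_vec_cancel_right assms(2,3) by (metis carrier_vecD)
qed

lemma LR_pair_obtain_basis: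
  fixes X Y :: "'a::field mat"
  assumes LR: "LR_pair n X Y" and n: "0 < n"
  obtains P Q where "LR_basis n X Y P Q" "\<forall>j. 1 \<le> j \<and> j < n \<longrightarrow> param_seq n X Y j \<noteq> 0"
proof -
  obtain Vs where X: "X \<in> carrier_mat n n" and Y: "Y \<in> carrier_mat n n"
    and Vs: "decomposition n Vs" "lowers n X Vs" "raises n Y Vs"
    using LR unfolding LR_pair_def by blast
  obtain P0 Q0 where P0Q0: "inverse_mats n P0 Q0" and Vs_P0: "Vs = map (\<lambda>i. line (col P0 i)) [0..<n]"
    using decomposition_obtain_inverse_mats[OF Vs(1)] .
  obtain \<mu> \<nu> where scalars:
    "\<forall>i. 1 \<le> i \<and> i < n \<longrightarrow> \<mu> i \<noteq> 0 \<and> X *\<^sub>v col P0 i = \<mu> i \<cdot>\<^sub>v col P0 (i - 1)"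
    "X *\<^sub>v col P0 0 = 0\<^sub>v n"
    "\<forall>i. Suc i < n \<longrightarrow> \<nu> i \<noteq> 0 \<and> Y *\<^sub>v col P0 i = \<nu> i \<cdot>\<^sub>v col P0 (Suc i)"
    "Y *\<^sub>v col P0 (n - 1) = 0\<^sub>v n"
    using lowers_raises_col_scalars[OF P0Q0 X Y Vs(2,3)[unfolded Vs_P0] n] .
  obtain P Q \<phi> where PQ: "inverse_mats n P Q" and XP: "X * P = P * lower_mat n \<phi>"
    and YP: "Y * P = P * raise_mat n" and \<phi>: "\<forall>j. 1 \<le> j \<and> j < n \<longrightarrow> \<phi> j \<noteq> 0"
    and lines: "\<forall>i<n. line (col P i) = line (col P0 i)"
    using rescale_cols_to_lower_raise[OF P0Q0 X Y scalars] .
  have P: "P \<in> carrier_mat n n" using PQ unfolding inverse_mats_def by simp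
  have Vs_P: "Vs = map (\<lambda>i. line (col P i)) [0..<n]" using Vs_P0 lines by simp
  have dec: "LR_dec n X Y = map (\<lambda>i. line (col P i)) [0..<n]"
    unfolding LR_dec_def Vs_P[symmetric]
    using lowered_raised_decomposition_unique[OF PQ X XP \<phi> Vs_P Vs(3) _ _ _ n] Vs
    by (intro the_equality) blast+
  have "param_seq n X Y j = \<phi> j" if j: "1 \<le> j" "j < n" for j
  proof (rule param_seq_eqI[OF _ col_carrier_vec[OF j(2) P] inverse_mats_col_nonzero[OF PQ j(2)] X Y])
    show "LR_dec n X Y ! j = line (col P j)" using dec j by simp
    have "X *\<^sub>v col P j = \<phi> j \<cdot>\<^sub>v col P (j - 1)" "Y *\<^sub>v col P (j - 1) = col P j"
      using mult_col_of_lower_mat[OF X P XP j(2)] mult_col_of_raise_mat[OF Y P YP, of "j - 1"] j by auto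
    then show "(Y * X) *\<^sub>v col P j = \<phi> j \<cdot>\<^sub>v col P j"
      using X Y P j mult_mat_vec[OF Y col_carrier_vec[of "j - 1" n P]] by simp
  qed
  then have "lower_mat n (param_seq n X Y) = lower_mat n \<phi>" by (intro lower_mat_cong) simp
  then have "LR_basis n X Y P Q" unfolding LR_basis_def using PQ dec XP YP by simp
  moreover have "\<forall>j. 1 \<le> j \<and> j < n \<longrightarrow> param_seq n X Y j \<noteq> 0"
    using \<phi> \<open>\<And>j. _ \<Longrightarrow> _ \<Longrightarrow> param_seq n X Y j = \<phi> j\<close> by simp
  ultimately show ?thesis using that by blast
qed

lemma LR_pair_param_seq_nonzero:
  assumes "LR_pair n X Y" "1 \<le> j" "j < n"
  shows "param_seq n X Y j \<noteq> 0"
  using LR_pair_obtain_basis[OF assms(1)] assms(2,3) by auto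

lemma LR_pair_dim_one:
  fixes X Y :: "'a::field mat"
  assumes "LR_pair (Suc 0) X Y"
  shows "X = 0\<^sub>m (Suc 0) (Suc 0)"
proof -
  obtain P Q where "LR_basis (Suc 0) X Y P Q" using LR_pair_obtain_basis[OF assms zero_less_Suc] by blast
  note P = LR_basisD[OF this]
  have "lower_mat (Suc 0) (param_seq (Suc 0) X Y) = (0\<^sub>m (Suc 0) (Suc 0) :: 'a mat)"
    unfolding lower_mat_def by (intro eq_matI) auto
  then have "X * P = 0\<^sub>m (Suc 0) (Suc 0) * P" using P(2,4) by simp
  moreover have "X \<in> carrier_mat (Suc 0) (Suc 0)" using assms unfolding LR_pair_def by simp
  ultimately show ?thesis using inverse_mats_cancel_right[OF P(1) _ zero_carrier_mat] by blast
qed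

section \<open>Traces against the projections of a decomposition\<close>

lemma mat_trace_mult_comm:
  fixes M N :: "'a::comm_ring_1 mat"
  assumes "M \<in> carrier_mat n m" "N \<in> carrier_mat m n"
  shows "mat_trace (M * N) = mat_trace (N * M)"
proof -
  have "mat_trace (M * N) = (\<Sum>i<n. \<Sum>l<m. M $$ (i, l) * N $$ (l, i))"
    using assms by (simp add: mat_trace_def scalar_prod_def atLeast0LessThan)
  also have "\<dots> = (\<Sum>l<m. \<Sum>i<n. N $$ (l, i) * M $$ (i, l))"
    by (subst sum.swap) (simp add: mult.commute)
  also have "\<dots> = mat_trace (N * M)"
    using assms by (simp add: mat_trace_def scalar_prod_def atLeast0LessThan)
  finally show ?thesis .
qed

lemma proj_comp_lines:
  fixes P Q :: "'a::field mat"
  assumes PQ: "inverse_mats n P Q" and k: "k < n"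
  shows "proj_comp n (map (\<lambda>i. line (col P i)) [0..<n]) k =
    P * mat_diag n (\<lambda>i. if i = k then 1 else 0) * Q"
proof -
  define D :: "'a mat" where "D = mat_diag n (\<lambda>i. if i = k then 1 else 0)"
  define E where "E = P * D * Q"
  have P: "P \<in> carrier_mat n n" "Q \<in> carrier_mat n n" "Q * P = 1\<^sub>m n"
    using PQ unfolding inverse_mats_def by auto
  have E: "E \<in> carrier_mat n n" using P unfolding E_def D_def by (meson mult_carrier_mat mat_diag_dim)
  have "E * P = P * D * (Q * P)"
    unfolding E_def D_def by (rule assoc_mult_mat[OF mult_carrier_mat[OF P(1) mat_diag_dim] P(2) P(1)])
  then have EP: "E * P = P * D" using P unfolding D_def by (simp add: mat_diag_def)
  have E_col: "E *\<^sub>v col P j = (if j = k then col P j else 0\<^sub>v n)" if "j < n" for j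
  proof -
    have "E *\<^sub>v col P j = col (P * D) j" using col_mult2[OF E P(1) that] EP by simp
    also have "\<dots> = (if j = k then col P j else 0\<^sub>v n)"
      using P(1) that by (auto simp: D_def mat_diag_mult_right intro!: eq_vecI)
    finally show ?thesis .
  qed
  have E_lines: "\<forall>j<n. \<forall>x \<in> line (col P j). E *\<^sub>v x = (if j = k then x else 0\<^sub>v n)"
    using E_col mult_mat_vec[OF E col_carrier_vec[OF _ P(1)]] by (auto simp: line_def)
  show ?thesis
    unfolding proj_comp_def D_def[symmetric] E_def[symmetric]
  proof (rule the_equality)
    show "E \<in> carrier_mat n n \<and> (\<forall>j<n. \<forall>x \<in> map (\<lambda>i. line (col P i)) [0..<n] ! j.
        E *\<^sub>v x = (if j = k then x else 0\<^sub>v n))"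
      using E E_lines by simp
  next
    fix E' assume E': "E' \<in> carrier_mat n n \<and> (\<forall>j<n. \<forall>x \<in> map (\<lambda>i. line (col P i)) [0..<n] ! j.
        E' *\<^sub>v x = (if j = k then x else 0\<^sub>v n))"
    have "col (E' * P) j = col (E * P) j" if "j < n" for j
      using E' E_lines line_self[of "col P j"] that col_mult2[OF E P(1) that] col_mult2[OF _ P(1) that, of E' n]
      by simp
    then have "E' * P = E * P" using E E' P(1) by (intro mat_col_eqI) auto
    then show "E' = E" using inverse_mats_cancel_right[OF PQ] E E' by blast
  qed
qed

lemma mat_trace_mult_proj_comp:
  fixes C P Q :: "'a::field mat"
  assumes PQ: "inverse_mats n P Q" and C: "C \<in> carrier_mat n n" and k: "k < n"
  shows "mat_trace (C * proj_comp n (map (\<lambda>i. line (col P i)) [0..<n]) k) = (Q *\<^sub>v (C *\<^sub>v col P k)) $ k"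
proof -
  define D :: "'a mat" where "D = mat_diag n (\<lambda>i. if i = k then 1 else 0)"
  define M where "M = Q * C * P"
  have P: "P \<in> carrier_mat n n" "Q \<in> carrier_mat n n" using PQ unfolding inverse_mats_def by auto
  have M: "M \<in> carrier_mat n n" using P C unfolding M_def by simp
  have "mat_trace (C * proj_comp n (map (\<lambda>i. line (col P i)) [0..<n]) k) = mat_trace (C * P * D * Q)"
    using P C by (simp add: proj_comp_lines[OF PQ k] D_def assoc_mult_mat[of _ n n _ n _ n])
  also have "\<dots> = mat_trace (Q * (C * P * D))"
    by (rule mat_trace_mult_comm) (use P C in \<open>auto intro!: mult_carrier_mat simp: D_def\<close>)
  also have "Q * (C * P * D) = M * D"
    using P C unfolding M_def D_def by (simp add: assoc_mult_mat[of _ n n _ n _ n])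
  also have "mat_trace (M * D) = M $$ (k, k)"
    using M k by (simp add: mat_trace_def D_def mat_diag_mult_right if_distrib[where f="\<lambda>a. y * a" for y]
        sum.delta' cong: if_cong)
  also have "\<dots> = col M k $ k" using M k by simp
  also have "col M k = Q *\<^sub>v (C *\<^sub>v col P k)"
    unfolding M_def using col_mult2[OF mult_carrier_mat[OF P(2) C] P(1) k]
      assoc_mult_mat_vec[OF P(2) C col_carrier_vec[OF k P(1)]] by simp
  finally show ?thesis .
qed

section \<open>LR triples\<close>

lemma LR_triple_B_C_last_col:
  fixes A B C P Q :: "'a::field mat"
  assumes T: "LR_triple n A B C" and n: "n = Suc d" and d: "1 \<le> d" and AB: "LR_basis n A B P Q"
  shows "B *\<^sub>v (C *\<^sub>v col P d) = param_seq n B C 1 \<cdot>\<^sub>v col P d"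
proof -
  have BC: "LR_pair n B C" using T unfolding LR_triple_def by simp
  have B: "B \<in> carrier_mat n n" and C: "C \<in> carrier_mat n n" using BC unfolding LR_pair_def by auto
  have P: "P \<in> carrier_mat n n" using LR_basisD[OF AB] by simp
  have z: "col P d \<in> carrier_vec n" using col_carrier_vec[OF _ P] n by simp
  have "B *\<^sub>v col P d = 0\<^sub>v n"
    using mult_col_of_raise_mat[OF B P LR_basisD(5)[OF AB], of d] n by simp
  obtain P2 Q2 where BC_basis: "LR_basis n B C P2 Q2"
    and \<phi>': "\<forall>j. 1 \<le> j \<and> j < n \<longrightarrow> param_seq n B C j \<noteq> 0"
    using LR_pair_obtain_basis[OF BC] n by blast
  note P2 = LR_basisD[OF BC_basis]
  define t where "t = (Q2 *\<^sub>v col P d) $ 0"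
  have z_eq: "col P d = t \<cdot>\<^sub>v col P2 0"
    unfolding t_def
    by (rule kernel_of_lower_mat[OF P2(1) B P2(4) \<phi>' z \<open>B *\<^sub>v col P d = 0\<^sub>v n\<close>]) (simp add: n)
  have "C *\<^sub>v col P2 0 = col P2 1" "B *\<^sub>v col P2 1 = param_seq n B C 1 \<cdot>\<^sub>v col P2 0"
    using mult_col_of_lower_mat[OF B P2(2,4), of 1] mult_col_of_raise_mat[OF C P2(2,5), of 0] n d by auto
  then have "B *\<^sub>v (C *\<^sub>v col P d) = t \<cdot>\<^sub>v (param_seq n B C 1 \<cdot>\<^sub>v col P2 0)"
    unfolding z_eq using mult_mat_vec[OF C col_carrier_vec[OF _ P2(2)], of 0 t]
      mult_mat_vec[OF B col_carrier_vec[OF _ P2(2)], of 1 t] n d by simp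
  then show ?thesis unfolding z_eq by (simp add: smult_smult_assoc mult.commute)
qed

lemma LR_triple_C_last_col:
  fixes A B C P Q :: "'a::field mat"
  assumes T: "LR_triple n A B C" and n: "n = Suc d" and d: "1 \<le> d" and AB: "LR_basis n A B P Q"
  shows "C *\<^sub>v col P d =
    trace_a n A B C d \<cdot>\<^sub>v col P d + (param_seq n B C 1 / param_seq n A B d) \<cdot>\<^sub>v (A *\<^sub>v col P d)"
proof -
  have A: "A \<in> carrier_mat n n" and B: "B \<in> carrier_mat n n" and C: "C \<in> carrier_mat n n"
    using T unfolding LR_triple_def LR_pair_def by auto
  note P = LR_basisD[OF AB]
  have "trace_a n A B C d = (Q *\<^sub>v (C *\<^sub>v col P d)) $ d"
    unfolding trace_a_def P(3) using mat_trace_mult_proj_comp[OF P(1) C] n by simp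
  then have Cz: "C *\<^sub>v col P d = trace_a n A B C d \<cdot>\<^sub>v col P d + param_seq n B C 1 \<cdot>\<^sub>v col P (d - 1)"
    using raise_mat_preimage_last[OF P(1)[unfolded n] B[unfolded n] P(5)[unfolded n] d _
        LR_triple_B_C_last_col[OF T n d AB]]
      mult_mat_vec_carrier[OF C col_carrier_vec[OF _ P(2)]] n by simp
  have \<phi>: "param_seq n A B d \<noteq> 0"
    using LR_pair_param_seq_nonzero[of n A B d] T n d unfolding LR_triple_def by simp
  have "A *\<^sub>v col P d = param_seq n A B d \<cdot>\<^sub>v col P (d - 1)"
    using mult_col_of_lower_mat[OF A P(2,4), of d] n d by auto
  then show ?thesis unfolding Cz using \<phi> by (simp add: smult_smult_assoc)
qed

lemma LR_triple_last_col_coordinates: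
  fixes A B C P Q R Ri :: "'a::field mat"
  assumes T: "LR_triple n A B C" and n: "n = Suc d" and d: "1 \<le> d"
    and AB: "LR_basis n A B P Q" and CA: "LR_basis n C A R Ri"
  defines "c \<equiv> Ri *\<^sub>v col P d"
  shows "lower_mat n (param_seq n C A) *\<^sub>v c =
      trace_a n A B C d \<cdot>\<^sub>v c + (param_seq n B C 1 / param_seq n A B d) \<cdot>\<^sub>v (raise_mat n *\<^sub>v c)"
    and "c \<noteq> 0\<^sub>v n"
proof -
  have A: "A \<in> carrier_mat n n" and C: "C \<in> carrier_mat n n"
    using T unfolding LR_triple_def LR_pair_def by auto
  note P = LR_basisD[OF AB] and R = LR_basisD[OF CA]
  have z: "col P d \<in> carrier_vec n" using col_carrier_vec[OF _ P(2)] n by simp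
  show "lower_mat n (param_seq n C A) *\<^sub>v c =
      trace_a n A B C d \<cdot>\<^sub>v c + (param_seq n B C 1 / param_seq n A B d) \<cdot>\<^sub>v (raise_mat n *\<^sub>v c)"
    unfolding c_def by (rule lower_raise_coordinates[OF R(1) A C R(4,5) z LR_triple_C_last_col[OF T n d AB]])
  have "R *\<^sub>v c = col P d" using inverse_mats_cancel_vec[OF inverse_mats_sym[OF R(1)] z] unfolding c_def .
  moreover have "col P d \<noteq> 0\<^sub>v n" using inverse_mats_col_nonzero[OF P(1)] n by simp
  moreover have "R *\<^sub>v 0\<^sub>v n = 0\<^sub>v n" using R(2) by (simp add: carrier_matD)
  ultimately show "c \<noteq> 0\<^sub>v n" by metis
qed

lemma LR_triple_iso_of_proportional_coordinates:
  fixes A B C A' B' C' :: "'a::field mat"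
  assumes T: "LR_triple n A B C" and T': "LR_triple n A' B' C'" and n: "n = Suc d"
    and AB: "LR_basis n A B P Q" and CA: "LR_basis n C A R Ri"
    and A'B': "LR_basis n A' B' P' Q'" and C'A': "LR_basis n C' A' R' Ri'"
    and lower_AB: "lower_mat n (param_seq n A' B') = lower_mat n (param_seq n A B)"
    and lower_CA: "lower_mat n (param_seq n C' A') = lower_mat n (param_seq n C A)"
    and coords: "Ri *\<^sub>v col P d = s \<cdot>\<^sub>v (Ri' *\<^sub>v col P' d)"
  shows "LR_triple_iso n A B C A' B' C'"
proof -
  have carrier: "A \<in> carrier_mat n n" "B \<in> carrier_mat n n" "C \<in> carrier_mat n n"
    "A' \<in> carrier_mat n n" "B' \<in> carrier_mat n n" "C' \<in> carrier_mat n n"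
    using T T' unfolding LR_triple_def LR_pair_def by auto
  note P = LR_basisD[OF AB] and R = LR_basisD[OF CA] and P' = LR_basisD[OF A'B'] and R' = LR_basisD[OF C'A']
  have Ri: "Ri \<in> carrier_mat n n" "Ri' \<in> carrier_mat n n"
    using R(1) R'(1) unfolding inverse_mats_def by auto
  define S where "S = R' * Ri"
  have S: "S \<in> carrier_mat n n" using R'(2) Ri(1) unfolding S_def by simp
  have SA: "S * A = A' * S"
    unfolding S_def by (rule intertwiner_of_common_form[OF R(1) R'(1) carrier(1,4) raise_mat_carrier R(5) R'(5)])
  have SC: "S * C = C' * S"
    unfolding S_def
    by (rule intertwiner_of_common_form[OF R(1) R'(1) carrier(3,6) lower_mat_carrier R(4) R'(4)[unfolded lower_CA]])
  have z: "col P d \<in> carrier_vec n" "col P' d \<in> carrier_vec n"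
    using col_carrier_vec[OF _ P(2)] col_carrier_vec[OF _ P'(2)] n by simp_all
  have "S *\<^sub>v col P d = R' *\<^sub>v (s \<cdot>\<^sub>v (Ri' *\<^sub>v col P' d))"
    unfolding S_def coords[symmetric] by (rule assoc_mult_mat_vec[OF R'(2) Ri(1) z(1)])
  also have "\<dots> = s \<cdot>\<^sub>v col P' d"
    using mult_mat_vec[OF R'(2) mult_mat_vec_carrier[OF Ri(2) z(2)]]
      inverse_mats_cancel_vec[OF inverse_mats_sym[OF R'(1)] z(2)] by simp
  finally have "S * P = s \<cdot>\<^sub>m P'"
    using intertwiner_maps_lower_basis[OF S carrier(1,4) P(2) P'(2) SA P(4) P'(4)[unfolded lower_AB] _ n]
      LR_pair_param_seq_nonzero[of n A B] T unfolding LR_triple_def by blast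
  then have "S * B = B' * S"
    by (rule intertwines_raise_mat[OF P(1) S carrier(2,5) P'(2) P(5) P'(5)])
  moreover have "invertible_mat S"
    using inverse_mats_invertible inverse_mats_mult[OF R'(1) inverse_mats_sym[OF R(1)]] unfolding S_def by blast
  ultimately show ?thesis unfolding LR_triple_iso_def using S SA SC by blast
qed

lemma LR_triple_iso_of_data:
  fixes A B C A' B' C' :: "'a::field mat"
  assumes T: "LR_triple n A B C" and T': "LR_triple n A' B' C'" and n: "n = Suc d" and d: "1 \<le> d"
    and pAB: "\<forall>i. 1 \<le> i \<and> i \<le> d \<longrightarrow> param_seq n A B i = param_seq n A' B' i"
    and pBC: "\<forall>i. 1 \<le> i \<and> i \<le> d \<longrightarrow> param_seq n B C i = param_seq n B' C' i"
    and pCA: "\<forall>i. 1 \<le> i \<and> i \<le> d \<longrightarrow> param_seq n C A i = param_seq n C' A' i"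
    and tr: "trace_a n A B C d = trace_a n A' B' C' d"
  shows "LR_triple_iso n A B C A' B' C'"
proof -
  have pairs: "LR_pair n A B" "LR_pair n C A" "LR_pair n A' B'" "LR_pair n C' A'"
    and "0 < n" using T T' n unfolding LR_triple_def by auto
  obtain P Q where AB: "LR_basis n A B P Q" using LR_pair_obtain_basis[OF pairs(1) \<open>0 < n\<close>] by blast
  obtain R Ri where CA: "LR_basis n C A R Ri" using LR_pair_obtain_basis[OF pairs(2) \<open>0 < n\<close>] by blast
  obtain P' Q' where A'B': "LR_basis n A' B' P' Q'"
    using LR_pair_obtain_basis[OF pairs(3) \<open>0 < n\<close>] by blast
  obtain R' Ri' where C'A': "LR_basis n C' A' R' Ri'"
    using LR_pair_obtain_basis[OF pairs(4) \<open>0 < n\<close>] by blast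
  have lower_AB: "lower_mat n (param_seq n A' B') = lower_mat n (param_seq n A B)"
    and lower_CA: "lower_mat n (param_seq n C' A') = lower_mat n (param_seq n C A)"
    using pAB pCA n by (auto intro!: lower_mat_cong)
  define c where "c = Ri *\<^sub>v col P d"
  define c' where "c' = Ri' *\<^sub>v col P' d"
  have "c = (c $ 0 / c' $ 0) \<cdot>\<^sub>v c'"
  proof (rule lower_raise_solutions_proportional)
    show "\<forall>j. 1 \<le> j \<and> j < n \<longrightarrow> param_seq n C A j \<noteq> 0"
      using LR_pair_param_seq_nonzero[OF pairs(2)] by blast
    show "c \<in> carrier_vec n" "c' \<in> carrier_vec n"
      using LR_basisD(1,2)[OF CA] LR_basisD(1,2)[OF C'A'] LR_basisD(2)[OF AB] LR_basisD(2)[OF A'B'] n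
        mult_mat_vec_carrier col_carrier_vec unfolding c_def c'_def inverse_mats_def by (metis lessI)+
    show "lower_mat n (param_seq n C A) *\<^sub>v c =
      trace_a n A B C d \<cdot>\<^sub>v c + (param_seq n B C 1 / param_seq n A B d) \<cdot>\<^sub>v (raise_mat n *\<^sub>v c)"
      unfolding c_def by (rule LR_triple_last_col_coordinates(1)[OF T n d AB CA])
    show "lower_mat n (param_seq n C A) *\<^sub>v c' =
      trace_a n A B C d \<cdot>\<^sub>v c' + (param_seq n B C 1 / param_seq n A B d) \<cdot>\<^sub>v (raise_mat n *\<^sub>v c')"
      using LR_triple_last_col_coordinates(1)[OF T' n d A'B' C'A'] lower_CA pAB pBC tr d
      unfolding c'_def by simp
    show "c' \<noteq> 0\<^sub>v n" unfolding c'_def by (rule LR_triple_last_col_coordinates(2)[OF T' n d A'B' C'A'])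
  qed
  then show ?thesis
    using LR_triple_iso_of_proportional_coordinates[OF T T' n AB CA A'B' C'A' lower_AB lower_CA]
    unfolding c_def c'_def by blast
qed

theorem proposition13p41:
  fixes A B C A' B' C' :: "'a::field mat" and d :: nat
  assumes "LR_triple (d + 1) A B C"
    and "LR_triple (d + 1) A' B' C'"
    and "\<forall>i. 1 \<le> i \<and> i \<le> d \<longrightarrow> param_seq (d + 1) A B i = param_seq (d + 1) A' B' i"
    and "\<forall>i. 1 \<le> i \<and> i \<le> d \<longrightarrow> param_seq (d + 1) B C i = param_seq (d + 1) B' C' i"
    and "\<forall>i. 1 \<le> i \<and> i \<le> d \<longrightarrow> param_seq (d + 1) C A i = param_seq (d + 1) C' A' i"
    and "\<forall>i \<le> d. trace_a (d + 1) A B C i = trace_a (d + 1) A' B' C' i"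
    and "\<forall>i \<le> d. trace_a' (d + 1) A B C i = trace_a' (d + 1) A' B' C' i"
    and "\<forall>i \<le> d. trace_a'' (d + 1) A B C i = trace_a'' (d + 1) A' B' C' i"
  shows "LR_triple_iso (d + 1) A B C A' B' C'"
proof (cases "d = 0")
  case True
  then have "A = 0\<^sub>m 1 1" "B = 0\<^sub>m 1 1" "C = 0\<^sub>m 1 1" "A' = 0\<^sub>m 1 1" "B' = 0\<^sub>m 1 1" "C' = 0\<^sub>m 1 1"
    using assms(1,2) LR_pair_dim_one unfolding LR_triple_def by auto
  moreover have "invertible_mat (1\<^sub>m 1 :: 'a mat)"
    using inverse_mats_invertible[of 1 "1\<^sub>m 1" "1\<^sub>m 1"] unfolding inverse_mats_def by simp
  ultimately show ?thesis unfolding LR_triple_iso_def using True by (intro bexI[of _ "1\<^sub>m 1"]) auto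
next
  case False
  \<comment> \<open>of the trace data only \<open>a\<^sub>d\<close> is needed\<close>
  then show ?thesis using LR_triple_iso_of_data[OF assms(1,2) _ _ assms(3-5)] assms(6) by simp
qed

end
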